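(* Let $X\times G\to X$ be a continuous right action of a locally compact Hausdorff group on a Hausdorff space, and let $F\subseteq X$ be a closed paracompact subset such that the action is $F$-proper. Then $FG\subseteq X$ is closed and paracompact.
   Context: For $A,B\subseteq X$ set $\langle A:B\rangle:=\{g\in G: Bg\cap A\neq\emptyset\}$ and write $A\perp B$ if it is relatively compact in $G$. For closed $F$, the action is $F$-proper if for every $x\in X$ there are neighborhoods $V_x\ni x$ and $V_F\supseteq F$ with $V_F\perp V_x$. *)

theory Defs
  imports "HOL-Analysis.Analysis"
begin

text \<open>Paracompact topological space: every open cover has a locally finite open refinement.
  (Hausdorffness is automatic for subspaces of a Hausdorff space.)\<close>
definition paracompact_space :: "'a topology \<Rightarrow> bool" where
  "paracompact_space T \<longleftrightarrow>
     (\<forall>\<U>. (\<forall>U\<in>\<U>. openin T U) \<and> \<Union>\<U> = topspace T \<longrightarrow>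
        (\<exists>\<V>. (\<forall>V\<in>\<V>. openin T V) \<and> \<Union>\<V> = topspace T \<and>
              (\<forall>V\<in>\<V>. \<exists>U\<in>\<U>. V \<subseteq> U) \<and> locally_finite_in T \<V>))"

text \<open>Continuous right action of a topological group (written additively, not necessarily
  commutative) on a space: x.0 = x, (x.g).h = x.(g+h), jointly continuous.\<close>
definition cont_right_action :: "('x::topological_space \<Rightarrow> 'g::topological_group_add \<Rightarrow> 'x) \<Rightarrow> bool" where
  "cont_right_action act \<longleftrightarrow>
     (\<forall>x. act x 0 = x) \<and> (\<forall>x g h. act (act x g) h = act x (g + h)) \<and>
     continuous_on UNIV (\<lambda>p. act (fst p) (snd p))"

definition transporter :: "('x \<Rightarrow> 'g \<Rightarrow> 'x) \<Rightarrow> 'x set \<Rightarrow> 'x set \<Rightarrow> 'g set" where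
  "transporter act A B = {g. (\<lambda>b. act b g) ` B \<inter> A \<noteq> {}}"

definition rel_compact_transp :: "('x \<Rightarrow> 'g::topological_space \<Rightarrow> 'x) \<Rightarrow> 'x set \<Rightarrow> 'x set \<Rightarrow> bool" where
  "rel_compact_transp act A B \<longleftrightarrow> compact (closure (transporter act A B))"

definition is_nhd :: "'a::topological_space set \<Rightarrow> 'a set \<Rightarrow> bool" where
  "is_nhd V S \<longleftrightarrow> (\<exists>U. open U \<and> S \<subseteq> U \<and> U \<subseteq> V)"

definition F_proper :: "('x::topological_space \<Rightarrow> 'g::topological_space \<Rightarrow> 'x) \<Rightarrow> 'x set \<Rightarrow> bool" where
  "F_proper act F \<longleftrightarrow>
     (\<forall>x. \<exists>Vx VF. is_nhd Vx {x} \<and> is_nhd VF F \<and> rel_compact_transp act VF Vx)"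

end

theory Submission
  imports Defs
begin

lemma Hausdorff_space_euclidean_t2: "Hausdorff_space (euclidean :: 'a::t2_space topology)"
  unfolding Hausdorff_space_def by (metis disjnt_def hausdorff open_openin topspace_euclidean UNIV_I)

lemma paracompact_Hausdorff_imp_regular_space:
  assumes paracompact: "paracompact_space X" and Hausdorff: "Hausdorff_space X"
  shows "regular_space X"
  unfolding regular_space_def
proof (intro allI impI)
  fix C a
  assume Ca: "closedin X C \<and> a \<in> topspace X - C"
  define \<U> where "\<U> = insert (topspace X - C) {P. openin X P \<and> a \<notin> X closure_of P}"
  have open_\<U>: "\<forall>U\<in>\<U>. openin X U"
    using Ca unfolding \<U>_def by auto
  have "z \<in> \<Union>\<U>" if "z \<in> C" for z
  proof -
    have "z \<in> topspace X" "z \<noteq> a"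
      using that Ca closedin_subset by blast+
    then obtain P R where "openin X P" "openin X R" "z \<in> P" "a \<in> R" "disjnt P R"
      using Hausdorff Ca unfolding Hausdorff_space_def by blast
    then have "P \<in> \<U>"
      unfolding \<U>_def by (metis disjnt_iff in_closure_of mem_Collect_eq insertCI)
    with \<open>z \<in> P\<close> show ?thesis by blast
  qed
  then have "\<Union>\<U> = topspace X"
    using open_\<U> openin_subset unfolding \<U>_def by blast
  then obtain \<W> where \<W>: "\<forall>W\<in>\<W>. openin X W" "\<Union>\<W> = topspace X"
    "\<forall>W\<in>\<W>. \<exists>U\<in>\<U>. W \<subseteq> U" "locally_finite_in X \<W>"
    using paracompact open_\<U> unfolding paracompact_space_def by metis
  define V where "V = \<Union>{W\<in>\<W>. W \<inter> C \<noteq> {}}"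
  have "openin X V"
    unfolding V_def using \<W>(1) by blast
  have "C \<subseteq> V"
  proof
    fix z assume "z \<in> C"
    then obtain W where "W \<in> \<W>" "z \<in> W"
      using \<W>(2) Ca closedin_subset by blast
    with \<open>z \<in> C\<close> show "z \<in> V"
      unfolding V_def by blast
  qed
  have "a \<notin> X closure_of V"
  proof
    have "locally_finite_in X {W\<in>\<W>. W \<inter> C \<noteq> {}}"
      by (rule locally_finite_in_subset[OF \<W>(4)]) blast
    moreover assume "a \<in> X closure_of V"
    ultimately obtain W where W: "W \<in> \<W>" "W \<inter> C \<noteq> {}" "a \<in> X closure_of W"
      unfolding V_def by (auto simp: closure_of_locally_finite_Union)
    then obtain U where "U \<in> \<U>" "W \<subseteq> U"
      using \<W>(3) by blast
    moreover have "U \<noteq> topspace X - C"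
      using W \<open>W \<subseteq> U\<close> by blast
    ultimately have "a \<notin> X closure_of U"
      unfolding \<U>_def by blast
    with W \<open>W \<subseteq> U\<close> show False
      using closure_of_mono by blast
  qed
  show "\<exists>U V. openin X U \<and> openin X V \<and> a \<in> U \<and> C \<subseteq> V \<and> disjnt U V"
  proof (intro exI conjI)
    show "openin X (topspace X - X closure_of V)"
      by (simp add: openin_diff)
    show "a \<in> topspace X - X closure_of V"
      using Ca \<open>a \<notin> X closure_of V\<close> by blast
    show "disjnt (topspace X - X closure_of V) V"
      using closure_of_subset[OF openin_subset[OF \<open>openin X V\<close>]] unfolding disjnt_def by blast
  qed fact+
qed

definition locally_finite_closed_refinement :: "'a topology \<Rightarrow> 'a set set \<Rightarrow> 'a set set \<Rightarrow> bool" where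
  "locally_finite_closed_refinement X \<U> \<A> \<longleftrightarrow>
     (\<forall>A\<in>\<A>. closedin X A) \<and> \<Union>\<A> = topspace X \<and> (\<forall>A\<in>\<A>. \<exists>U\<in>\<U>. A \<subseteq> U) \<and>
     locally_finite_in X \<A>"

lemma locally_finite_closed_refinementD:
  assumes "locally_finite_closed_refinement X \<U> \<A>"
  shows "\<And>A. A \<in> \<A> \<Longrightarrow> closedin X A" "\<Union>\<A> = topspace X" "\<And>A. A \<in> \<A> \<Longrightarrow> \<exists>U\<in>\<U>. A \<subseteq> U"
    "locally_finite_in X \<A>"
  using assms unfolding locally_finite_closed_refinement_def by simp_all

lemma paracompact_space_closed_refinement:
  assumes paracompact: "paracompact_space X" and "Hausdorff_space X"
    and open_\<U>: "\<forall>U\<in>\<U>. openin X U" and cover_\<U>: "\<Union>\<U> = topspace X"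
  shows "\<exists>\<Z>. locally_finite_closed_refinement X \<U> \<Z>"
proof -
  have regular: "regular_space X"
    using paracompact_Hausdorff_imp_regular_space assms by blast
  define \<V> where "\<V> = {V. openin X V \<and> (\<exists>U\<in>\<U>. X closure_of V \<subseteq> U)}"
  have open_\<V>: "\<forall>V\<in>\<V>. openin X V"
    unfolding \<V>_def by blast
  have "x \<in> \<Union>\<V>" if x: "x \<in> topspace X" for x
  proof -
    obtain U where U: "U \<in> \<U>" "x \<in> U"
      using x cover_\<U> by blast
    moreover have "closedin X (topspace X - U)"
      using U open_\<U> by blast
    ultimately obtain V where "openin X V" "x \<in> V" "disjnt (topspace X - U) (X closure_of V)"
      using regular x unfolding regular_space by blast
    moreover have "X closure_of V \<subseteq> U"
      using calculation(3) closure_of_subset_topspace[of X V] unfolding disjnt_def by blast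
    ultimately show ?thesis
      using U unfolding \<V>_def by blast
  qed
  then have "\<Union>\<V> = topspace X"
    using open_\<V> openin_subset by blast
  then obtain \<W> where \<W>: "\<forall>W\<in>\<W>. openin X W" "\<Union>\<W> = topspace X"
    "\<forall>W\<in>\<W>. \<exists>V\<in>\<V>. W \<subseteq> V" "locally_finite_in X \<W>"
    using paracompact open_\<V> unfolding paracompact_space_def by metis
  show ?thesis
    unfolding locally_finite_closed_refinement_def
  proof (intro exI conjI)
    show "\<forall>Z\<in>(closure_of) X ` \<W>. closedin X Z"
      by auto
    have "W \<subseteq> X closure_of W" if "W \<in> \<W>" for W
      using that \<W>(1) by (simp add: closure_of_subset openin_subset)
    then have "topspace X \<subseteq> \<Union>((closure_of) X ` \<W>)"
      unfolding \<W>(2)[symmetric] by blast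
    then show "\<Union>((closure_of) X ` \<W>) = topspace X"
      by (simp add: closure_of_subset_topspace subset_antisym UN_least)
    show "\<forall>Z\<in>(closure_of) X ` \<W>. \<exists>U\<in>\<U>. Z \<subseteq> U"
    proof
      fix Z assume "Z \<in> (closure_of) X ` \<W>"
      then obtain W V U where "Z = X closure_of W" "W \<subseteq> V" "U \<in> \<U>" "X closure_of V \<subseteq> U"
        using \<W>(3) unfolding \<V>_def by blast
      then show "\<exists>U\<in>\<U>. Z \<subseteq> U"
        by (meson closure_of_mono order_trans)
    qed
    show "locally_finite_in X ((closure_of) X ` \<W>)"
      using \<W>(4) by (rule locally_finite_in_closure)
  qed
qed

lemma closed_refinements_imp_paracompact_space:
  assumes refine: "\<And>\<U>. \<forall>U\<in>\<U>. openin X U \<Longrightarrow> \<Union>\<U> = topspace X \<Longrightarrow>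
                      \<exists>\<A>. locally_finite_closed_refinement X \<U> \<A>"
  shows "paracompact_space X"
  unfolding paracompact_space_def
proof (intro allI impI, elim conjE)
  fix \<U> assume open_\<U>: "\<forall>U\<in>\<U>. openin X U" and cover_\<U>: "\<Union>\<U> = topspace X"
  obtain \<A> where "locally_finite_closed_refinement X \<U> \<A>"
    using refine[OF open_\<U> cover_\<U>] by blast
  then have \<A>: "\<forall>A\<in>\<A>. closedin X A" "\<Union>\<A> = topspace X" "\<forall>A\<in>\<A>. \<exists>U\<in>\<U>. A \<subseteq> U"
    "locally_finite_in X \<A>"
    unfolding locally_finite_closed_refinement_def by simp_all
  define \<W> where "\<W> = {W. openin X W \<and> finite {A\<in>\<A>. A \<inter> W \<noteq> {}}}"
  have open_\<W>: "\<forall>W\<in>\<W>. openin X W"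
    unfolding \<W>_def by blast
  have cover_\<W>: "\<Union>\<W> = topspace X"
  proof
    show "\<Union>\<W> \<subseteq> topspace X"
      using openin_subset unfolding \<W>_def by blast
    show "topspace X \<subseteq> \<Union>\<W>"
      using \<A>(4) unfolding locally_finite_in_def \<W>_def by blast
  qed
  obtain \<C> where "locally_finite_closed_refinement X \<W> \<C>"
    using refine[OF open_\<W> cover_\<W>] by blast
  then have \<C>: "\<forall>C\<in>\<C>. closedin X C" "\<Union>\<C> = topspace X" "\<forall>C\<in>\<C>. \<exists>W\<in>\<W>. C \<subseteq> W"
    "locally_finite_in X \<C>"
    unfolding locally_finite_closed_refinement_def by simp_all
  \<comment> \<open>E A is an open neighbourhood of A meeting a member of \<C> only if A does; as each
    member of \<C> meets only finitely many members of \<A>, the E A form a locally finite family.\<close>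
  define E where "E A = topspace X - \<Union>{C\<in>\<C>. C \<inter> A = {}}" for A
  have open_E: "openin X (E A)" for A
  proof -
    have "locally_finite_in X {C\<in>\<C>. C \<inter> A = {}}"
      by (rule locally_finite_in_subset[OF \<C>(4)]) blast
    then have "closedin X (\<Union>{C\<in>\<C>. C \<inter> A = {}})"
      by (intro closedin_locally_finite_Union) (use \<C>(1) in auto)
    then show ?thesis
      unfolding E_def by (simp add: openin_diff)
  qed
  obtain u where u: "\<And>A. A \<in> \<A> \<Longrightarrow> u A \<in> \<U> \<and> A \<subseteq> u A"
    using \<A>(3) by metis
  have A_E: "A \<subseteq> E A" if "A \<in> \<A>" for A
    using that \<A>(1) closedin_subset unfolding E_def by blast
  define \<V> where "\<V> = (\<lambda>A. E A \<inter> u A) ` \<A>"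
  have cover_\<V>: "\<Union>\<V> = topspace X"
  proof
    show "\<Union>\<V> \<subseteq> topspace X"
      unfolding \<V>_def E_def by auto
    show "topspace X \<subseteq> \<Union>\<V>"
    proof
      fix x assume "x \<in> topspace X"
      then obtain A where "A \<in> \<A>" "x \<in> A"
        by (metis \<A>(2) UnionE)
      then show "x \<in> \<Union>\<V>"
        unfolding \<V>_def using A_E u by blast
    qed
  qed
  have "locally_finite_in X \<V>"
    unfolding locally_finite_in_def
  proof (intro conjI ballI)
    show "\<Union>\<V> \<subseteq> topspace X"
      by (simp add: cover_\<V>)
    fix x assume "x \<in> topspace X"
    then obtain N where N: "openin X N" "x \<in> N" "finite {C\<in>\<C>. C \<inter> N \<noteq> {}}"
      using \<C>(4) unfolding locally_finite_in_def by blast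
    define S where "S = (\<Union>C\<in>{C\<in>\<C>. C \<inter> N \<noteq> {}}. {A\<in>\<A>. A \<inter> C \<noteq> {}})"
    have "finite {A\<in>\<A>. A \<inter> C \<noteq> {}}" if C: "C \<in> \<C>" for C
    proof -
      obtain W where "W \<in> \<W>" "C \<subseteq> W"
        using \<C>(3) C by blast
      then show ?thesis
        unfolding \<W>_def by (auto elim!: rev_finite_subset)
    qed
    then have "finite S"
      unfolding S_def using N(3) by blast
    moreover have "{V\<in>\<V>. V \<inter> N \<noteq> {}} \<subseteq> (\<lambda>A. E A \<inter> u A) ` S"
    proof
      fix V assume "V \<in> {V\<in>\<V>. V \<inter> N \<noteq> {}}"
      then obtain A z where A: "A \<in> \<A>" "V = E A \<inter> u A" "z \<in> V" "z \<in> N"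
        unfolding \<V>_def by blast
      then obtain C where "C \<in> \<C>" "z \<in> C"
        unfolding \<C>(2)[symmetric] E_def by blast
      moreover have "C \<inter> A \<noteq> {}"
        using A calculation unfolding E_def by blast
      ultimately have "A \<in> S"
        unfolding S_def using A by blast
      then show "V \<in> (\<lambda>A. E A \<inter> u A) ` S"
        using A(2) by blast
    qed
    ultimately have "finite {V\<in>\<V>. V \<inter> N \<noteq> {}}"
      by (rule finite_surj)
    then show "\<exists>V. openin X V \<and> x \<in> V \<and> finite {U\<in>\<V>. U \<inter> V \<noteq> {}}"
      using N by blast
  qed
  moreover have "\<forall>V\<in>\<V>. openin X V"
    unfolding \<V>_def using open_E u open_\<U> by blast
  moreover have "\<forall>V\<in>\<V>. \<exists>U\<in>\<U>. V \<subseteq> U"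
    unfolding \<V>_def using u by blast
  ultimately show "\<exists>\<V>. (\<forall>V\<in>\<V>. openin X V) \<and> \<Union>\<V> = topspace X \<and> (\<forall>V\<in>\<V>. \<exists>U\<in>\<U>. V \<subseteq> U) \<and>
                     locally_finite_in X \<V>"
    using cover_\<V> by blast
qed

lemma locally_finite_in_closedin_subtopology:
  assumes "closedin X S" and "locally_finite_in (subtopology X S) \<A>"
  shows "locally_finite_in X \<A>"
  unfolding locally_finite_in_def
proof (intro conjI ballI)
  show "\<Union>\<A> \<subseteq> topspace X"
    using assms unfolding locally_finite_in_def by auto
  fix x assume x: "x \<in> topspace X"
  show "\<exists>V. openin X V \<and> x \<in> V \<and> finite {A\<in>\<A>. A \<inter> V \<noteq> {}}"
  proof (cases "x \<in> S")
    case True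
    with x have "x \<in> topspace (subtopology X S)"
      by simp
    then obtain V where V: "openin (subtopology X S) V" "x \<in> V" "finite {A\<in>\<A>. A \<inter> V \<noteq> {}}"
      using assms(2) unfolding locally_finite_in_def by blast
    then obtain V' where "openin X V'" "V = S \<inter> V'"
      by (auto simp: openin_subtopology)
    moreover have "{A\<in>\<A>. A \<inter> V' \<noteq> {}} = {A\<in>\<A>. A \<inter> V \<noteq> {}}"
      using assms(2) calculation(2) unfolding locally_finite_in_def by auto
    ultimately show ?thesis
      using V by auto
  next
    case False
    have "{A\<in>\<A>. A \<inter> (topspace X - S) \<noteq> {}} = {}"
      using assms(2) unfolding locally_finite_in_def by auto
    moreover have "openin X (topspace X - S)"
      using assms(1) by blast
    ultimately show ?thesis
      using False x by (metis Diff_iff finite.emptyI)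
  qed
qed

lemma locally_finite_compact_neighbourhood:
  assumes "locally_finite_in euclidean \<A>" and "compact K"
  obtains V where "open V" "K \<subseteq> V" "finite {A\<in>\<A>. A \<inter> V \<noteq> {}}"
proof -
  define \<T> where "\<T> = {V. open V \<and> finite {A\<in>\<A>. A \<inter> V \<noteq> {}}}"
  have "K \<subseteq> \<Union>\<T>"
    using assms(1) unfolding locally_finite_in_def \<T>_def by auto
  then obtain \<T>' where \<T>': "\<T>' \<subseteq> \<T>" "finite \<T>'" "K \<subseteq> \<Union>\<T>'"
    using compactE[OF assms(2)] unfolding \<T>_def by blast
  have "{A\<in>\<A>. A \<inter> \<Union>\<T>' \<noteq> {}} = (\<Union>V\<in>\<T>'. {A\<in>\<A>. A \<inter> V \<noteq> {}})"
    by blast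
  then have "finite {A\<in>\<A>. A \<inter> \<Union>\<T>' \<noteq> {}}"
    using \<T>' unfolding \<T>_def by auto
  moreover have "open (\<Union>\<T>')"
    using \<T>'(1) unfolding \<T>_def by blast
  ultimately show thesis
    using that \<T>'(3) by blast
qed

lemma regular_space_euclidean_closed_neighbourhood:
  fixes W :: "'a::topological_space set"
  assumes "regular_space (euclidean :: 'a topology)" "open W" "x \<in> W"
  obtains U V where "open U" "closed V" "x \<in> U" "U \<subseteq> V" "V \<subseteq> W"
proof -
  have "\<forall>W (y::'a). open W \<and> y \<in> W \<longrightarrow> (\<exists>U V. open U \<and> closed V \<and> y \<in> U \<and> U \<subseteq> V \<and> V \<subseteq> W)"
    using assms(1) by (simp add: neighbourhood_base_of_closedin[symmetric] neighbourhood_base_of)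
  then show thesis
    using assms(2,3) that by blast
qed

lemma open_left_translation:
  fixes S :: "'a::topological_group_add set"
  assumes "open S"
  shows "open ((+) a ` S)"
proof -
  have "(+) a ` S = (+) (- a) -` S"
  proof (intro set_eqI iffI)
    fix x assume "x \<in> (+) (- a) -` S"
    then have "a + (- a + x) \<in> (+) a ` S"
      by blast
    then show "x \<in> (+) a ` S"
      by (simp add: add.assoc[symmetric])
  qed (auto simp: add.assoc[symmetric])
  moreover have "open ((+) (- a) -` S)"
    using assms by (intro open_vimage continuous_intros)
  ultimately show ?thesis
    by simp
qed

lemma compact_left_translation:
  fixes S :: "'a::topological_group_add set"
  shows "compact S \<Longrightarrow> compact ((+) a ` S)"
  by (intro compact_continuous_image continuous_intros)

lemma compact_uminus_image:
  fixes S :: "'a::topological_group_add set"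
  shows "compact S \<Longrightarrow> compact (uminus ` S)"
  by (intro compact_continuous_image continuous_intros)

lemma compact_set_plus:
  fixes A B :: "'a::topological_monoid_add set"
  assumes "compact A" "compact B"
  shows "compact (A + B)"
proof -
  have "A + B = (\<lambda>p. fst p + snd p) ` (A \<times> B)"
    by (force simp: set_plus_def)
  moreover have "compact ((\<lambda>p. fst p + snd p) ` (A \<times> B))"
    using assms by (intro compact_continuous_image compact_Times continuous_intros)
  ultimately show ?thesis
    by simp
qed

fun sum_power :: "'a::monoid_add set \<Rightarrow> nat \<Rightarrow> 'a set" where
  "sum_power W 0 = {0}"
| "sum_power W (Suc n) = sum_power W n + W"

lemma sum_power_add: "sum_power W (m + n) = sum_power W m + sum_power W n"
proof (induction n)
  case 0
  show ?case
    by (metis add.right_neutral set_zero sum_power.simps(1))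
qed (simp add: add.assoc)

lemma compact_sum_power:
  fixes W :: "'a::topological_monoid_add set"
  shows "compact W \<Longrightarrow> compact (sum_power W n)"
  by (induction n) (simp_all add: compact_set_plus)

lemma sum_power_subset_interior:
  fixes W :: "'a::topological_group_add set"
  assumes "0 \<in> interior W"
  shows "sum_power W n \<subseteq> interior (sum_power W (Suc n))"
proof
  fix a assume a: "a \<in> sum_power W n"
  have "(+) a ` interior W \<subseteq> sum_power W (Suc n)"
    using a interior_subset by auto
  moreover have "a \<in> (+) a ` interior W"
    using assms by force
  ultimately show "a \<in> interior (sum_power W (Suc n))"
    by (meson interior_maximal open_interior open_left_translation subsetD)
qed

lemma uminus_sum_power:
  fixes W :: "'a::group_add set"
  assumes "\<And>w. w \<in> W \<Longrightarrow> - w \<in> W"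
  shows "a \<in> sum_power W n \<Longrightarrow> - a \<in> sum_power W n"
proof (induction n arbitrary: a)
  case (Suc n)
  then obtain b w where "a = b + w" "b \<in> sum_power W n" "w \<in> W"
    by (auto elim: set_plus_elim)
  have "- w \<in> sum_power W (Suc 0)"
    using set_plus_intro[of 0 "{0}" "- w" W] assms \<open>w \<in> W\<close> by simp
  then have "- w + - b \<in> sum_power W (Suc 0 + n)"
    unfolding sum_power_add using Suc.IH[OF \<open>b \<in> sum_power W n\<close>] by (rule set_plus_intro)
  then show ?case
    using \<open>a = b + w\<close> by (simp add: minus_add)
qed simp

lemma locally_compact_group_exhaustion:
  assumes "locally_compact_space (euclidean :: 'a topology)"
  obtains S :: "nat \<Rightarrow> 'a::topological_group_add set" where "\<And>n. compact (S n)"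
    "\<And>n. S n \<subseteq> interior (S (Suc n))" "0 \<in> S 0"
    "\<And>a b m n. a \<in> S m \<Longrightarrow> b \<in> S n \<Longrightarrow> a + b \<in> S (m + n)" "\<And>a n. a \<in> S n \<Longrightarrow> - a \<in> S n"
proof -
  obtain U K :: "'a set" where "open U" "compact K" "0 \<in> U" "U \<subseteq> K"
    using assms unfolding locally_compact_space_def by (metis UNIV_I compactin_euclidean_iff open_openin
        topspace_euclidean)
  define W where "W = K \<union> uminus ` K"
  have "compact W"
    unfolding W_def using \<open>compact K\<close> by (simp add: compact_Un compact_uminus_image)
  moreover have "0 \<in> interior W"
    using \<open>open U\<close> \<open>0 \<in> U\<close> \<open>U \<subseteq> K\<close> unfolding W_def by (meson interior_maximal le_supI1 subsetD)
  moreover have "- w \<in> W" if "w \<in> W" for w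
    using that unfolding W_def by force
  ultimately show thesis
    by (intro that[of "sum_power W"] compact_sum_power sum_power_subset_interior uminus_sum_power)
      (auto simp: sum_power_add)
qed

fun shell :: "(nat \<Rightarrow> 'a::topological_space set) \<Rightarrow> nat \<Rightarrow> 'a set" where
  "shell S 0 = S 0"
| "shell S (Suc n) = S (Suc n) - interior (S n)"

lemma shell_subset: "shell S n \<subseteq> S n"
  by (cases n) auto

lemma compact_shell: "(\<And>n. compact (S n)) \<Longrightarrow> compact (shell S n)"
  by (cases n) (simp_all add: compact_diff)

lemma in_shell: "x \<in> S n \<Longrightarrow> \<exists>k. x \<in> shell S k"
proof (induction n)
  case 0
  then have "x \<in> shell S 0"
    by simp
  then show ?case ..
next
  case (Suc n)
  show ?case
  proof (cases "x \<in> interior (S n)")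
    case True
    then show ?thesis
      using Suc.IH interior_subset by blast
  next
    case False
    with Suc.prems have "x \<in> shell S (Suc n)"
      by simp
    then show ?thesis ..
  qed
qed

lemma Union_shell: "(\<Union>n. shell S n) = (\<Union>n. S n)"
proof
  show "(\<Union>n. shell S n) \<subseteq> (\<Union>n. S n)"
    by (intro UN_mono) (simp_all add: shell_subset)
  show "(\<Union>n. S n) \<subseteq> (\<Union>n. shell S n)"
  proof
    fix x assume "x \<in> (\<Union>n. S n)"
    then obtain n where "x \<in> S n"
      by blast
    then obtain k where "x \<in> shell S k"
      using in_shell by blast
    then show "x \<in> (\<Union>n. shell S n)"
      by blast
  qed
qed

lemma shell_Int_interior:
  assumes exhaustion: "\<And>n. S n \<subseteq> interior (S (Suc n))" and "m < k"
  shows "shell S k \<inter> interior (S m) = {}"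
proof -
  obtain j where "k = Suc j" "m \<le> j"
    using \<open>m < k\<close> by (metis less_Suc_eq_le lessE)
  moreover have "S m \<subseteq> S j"
    by (rule lift_Suc_mono_le[OF _ \<open>m \<le> j\<close>]) (meson exhaustion interior_subset order_trans)
  then have "interior (S m) \<subseteq> interior (S j)"
    by (rule interior_mono)
  ultimately show ?thesis
    by auto
qed

lemma subgroup_coset_representatives:
  fixes H :: "'a::group_add set"
  assumes "0 \<in> H" and add: "\<And>a b. a \<in> H \<Longrightarrow> b \<in> H \<Longrightarrow> a + b \<in> H"
    and uminus: "\<And>a. a \<in> H \<Longrightarrow> - a \<in> H"
  obtains R where "\<And>x. \<exists>r\<in>R. - r + x \<in> H" "\<And>r r'. r \<in> R \<Longrightarrow> r' \<in> R \<Longrightarrow> - r + r' \<in> H \<Longrightarrow> r = r'"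
proof
  define rep where "rep x = (SOME r. - r + x \<in> H)" for x
  have rep: "- rep x + x \<in> H" for x
    unfolding rep_def by (rule someI[of _ x]) (simp add: \<open>0 \<in> H\<close>)
  have rep_eq: "rep x = rep y" if "- x + y \<in> H" for x y
  proof -
    have "- r + x \<in> H \<longleftrightarrow> - r + y \<in> H" for r
    proof -
      have "- r + y = (- r + x) + (- x + y)" "- r + x = (- r + y) + - (- x + y)"
        by (simp_all add: add.assoc minus_add del: add_uminus_conv_diff)
      then show ?thesis
        using add uminus that by metis
    qed
    then show ?thesis
      unfolding rep_def by simp
  qed
  show "\<exists>r\<in>range rep. - r + x \<in> H" for x
    using rep by blast
  show "r = r'" if "r \<in> range rep" "r' \<in> range rep" and rr': "- r + r' \<in> H" for r r'
  proof -
    from that obtain x y where "r = rep x" "r' = rep y"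
      by blast
    moreover have "- x + y = - (- r + x) + (- r + r') + (- r' + y)"
      by (simp add: add.assoc minus_add)
    ultimately have "- x + y \<in> H"
      using rep rr' by (metis add uminus)
    then show ?thesis
      using rep_eq \<open>r = rep x\<close> \<open>r' = rep y\<close> by blast
  qed
qed

lemma locally_compact_group_locally_finite_compact_cover:
  assumes "locally_compact_space (euclidean :: 'a topology)"
  obtains \<D> :: "'a::topological_group_add set set"
  where "\<forall>D\<in>\<D>. compact D" "\<Union>\<D> = UNIV" "locally_finite_in euclidean \<D>"
proof -
  obtain S :: "nat \<Rightarrow> 'a set" where compact_S: "\<And>n. compact (S n)"
    and exhaustion: "\<And>n. S n \<subseteq> interior (S (Suc n))" and "0 \<in> S 0"
    and add_S: "\<And>a b m n. a \<in> S m \<Longrightarrow> b \<in> S n \<Longrightarrow> a + b \<in> S (m + n)"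
    and uminus_S: "\<And>a n. a \<in> S n \<Longrightarrow> - a \<in> S n"
    using locally_compact_group_exhaustion[OF assms] by blast
  define H where "H = (\<Union>n. S n)"
  have H_0: "0 \<in> H"
    unfolding H_def using \<open>0 \<in> S 0\<close> by blast
  have H_add: "a + b \<in> H" if "a \<in> H" "b \<in> H" for a b
    using that add_S unfolding H_def by blast
  have H_uminus: "- a \<in> H" if "a \<in> H" for a
    using that uminus_S unfolding H_def by blast
  obtain R where R: "\<And>x. \<exists>r\<in>R. - r + x \<in> H"
    and R_unique: "\<And>r r'. r \<in> R \<Longrightarrow> r' \<in> R \<Longrightarrow> - r + r' \<in> H \<Longrightarrow> r = r'"
    using subgroup_coset_representatives[OF H_0 H_add H_uminus] by blast
  have H_shell: "H = (\<Union>n. shell S n)"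
    unfolding H_def by (simp add: Union_shell)
  define \<D> where "\<D> = {(+) r ` shell S n | r n. r \<in> R}"
  show thesis
  proof
    show "\<forall>D\<in>\<D>. compact D"
      unfolding \<D>_def by (auto intro!: compact_left_translation compact_shell compact_S)
    have "x \<in> \<Union>\<D>" for x
    proof -
      obtain r n where "r \<in> R" "- r + x \<in> shell S n"
        using R[of x] unfolding H_shell by blast
      then have "r + (- r + x) \<in> (+) r ` shell S n"
        by blast
      then show ?thesis
        unfolding \<D>_def using \<open>r \<in> R\<close> by (auto simp: add.assoc[symmetric])
    qed
    then show "\<Union>\<D> = UNIV"
      by blast
    show "locally_finite_in euclidean \<D>"
      unfolding locally_finite_in_def
    proof (intro conjI ballI)
      fix x :: 'a
      obtain r n where "r \<in> R" "- r + x \<in> S n"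
        using R[of x] unfolding H_def by blast
      define V where "V = (+) r ` interior (S (Suc n))"
      have "x \<in> V"
      proof -
        have "r + (- r + x) \<in> V"
          unfolding V_def using \<open>- r + x \<in> S n\<close> exhaustion by blast
        then show ?thesis
          by (simp add: add.assoc[symmetric])
      qed
      moreover have "open V"
        unfolding V_def by (simp add: open_left_translation)
      moreover have "{D\<in>\<D>. D \<inter> V \<noteq> {}} \<subseteq> (\<lambda>k. (+) r ` shell S k) ` {..Suc n}"
      proof
        fix D assume "D \<in> {D\<in>\<D>. D \<inter> V \<noteq> {}}"
        then obtain r' k a b where D: "D = (+) r' ` shell S k" "r' \<in> R"
          and b: "b \<in> shell S k" and a: "a \<in> interior (S (Suc n))" and eq: "r' + b = r + a"
          unfolding \<D>_def V_def by blast
        have "a \<in> H" "b \<in> H"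
          unfolding H_def using a b interior_subset shell_subset by blast+
        then have "a + - b \<in> H"
          using H_add H_uminus by blast
        moreover have "- r + r' = - r + (r' + b) + - b"
          by (simp add: add.assoc del: add_uminus_conv_diff)
        then have "- r + r' = a + - b"
          using eq by simp
        ultimately have "r' = r"
          using R_unique[OF \<open>r \<in> R\<close> \<open>r' \<in> R\<close>] by simp
        with eq have "b = a"
          by simp
        then have "k \<le> Suc n"
          using shell_Int_interior[of S "Suc n" k, OF exhaustion] a b by (meson disjoint_iff not_le)
        then show "D \<in> (\<lambda>k. (+) r ` shell S k) ` {..Suc n}"
          using D \<open>r' = r\<close> by blast
      qed
      then have "finite {D\<in>\<D>. D \<inter> V \<noteq> {}}"
        by (rule finite_subset) simp
      ultimately show "\<exists>V. openin euclidean V \<and> x \<in> V \<and> finite {D\<in>\<D>. D \<inter> V \<noteq> {}}"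
        by (metis open_openin)
    qed simp
  qed
qed

context
  fixes act :: "'x::topological_space \<Rightarrow> 'g::topological_group_add \<Rightarrow> 'x"
  assumes action: "cont_right_action act"
begin

lemma act_0 [simp]: "act x 0 = x"
  using action unfolding cont_right_action_def by blast

lemma act_act [simp]: "act (act x g) h = act x (g + h)"
  using action unfolding cont_right_action_def by blast

lemma continuous_on_act: "continuous_on UNIV (case_prod act)"
  using action unfolding cont_right_action_def case_prod_unfold by blast

lemma act_tube:
  assumes "compact M" "open Q" "\<forall>m\<in>M. act y (- m) \<in> Q"
  obtains N where "open N" "y \<in> N" "\<forall>y'\<in>N. \<forall>m\<in>M. act y' (- m) \<in> Q"
proof -
  have "continuous_on UNIV (case_prod act \<circ> (\<lambda>p. (fst p, - snd p)))"
    by (intro continuous_on_compose continuous_intros continuous_on_subset[OF continuous_on_act]) simp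
  then have "open ((\<lambda>p. act (fst p) (- snd p)) -` Q)"
    using assms(2) by (simp add: o_def open_vimage)
  moreover have "{y} \<times> M \<subseteq> (\<lambda>p. act (fst p) (- snd p)) -` Q"
    using assms(3) by auto
  ultimately have "\<exists>N. y \<in> N \<and> open N \<and> N \<times> M \<subseteq> (\<lambda>p. act (fst p) (- snd p)) -` Q"
    by (rule Elementary_Topology.tube_lemma[OF assms(1)])
  then obtain N where "y \<in> N" "open N" "N \<times> M \<subseteq> (\<lambda>p. act (fst p) (- snd p)) -` Q"
    by blast
  moreover from this(3) have "\<forall>y'\<in>N. \<forall>m\<in>M. act y' (- m) \<in> Q"
    by auto
  ultimately show thesis
    using that by blast
qed

lemma closed_act_image:
  assumes "closed Z" "compact M"
  shows "closed (case_prod act ` (Z \<times> M))"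
  unfolding closed_def
proof (rule open_subopen[THEN iffD2], intro ballI)
  fix y assume y: "y \<in> - case_prod act ` (Z \<times> M)"
  have "\<forall>m\<in>M. act y (- m) \<in> - Z"
  proof (intro ballI ComplI)
    fix m assume "m \<in> M" "act y (- m) \<in> Z"
    then have "act (act y (- m)) m \<in> case_prod act ` (Z \<times> M)"
      by (intro image_eqI[where x="(act y (- m), m)"]) auto
    with y show False
      by simp
  qed
  moreover have "open (- Z)"
    using assms(1) by (simp add: open_Compl)
  ultimately obtain N where N: "open N" "y \<in> N" "\<forall>y'\<in>N. \<forall>m\<in>M. act y' (- m) \<in> - Z"
    using act_tube[OF assms(2)] by blast
  have "N \<subseteq> - case_prod act ` (Z \<times> M)"
  proof
    fix y' assume "y' \<in> N"
    show "y' \<in> - case_prod act ` (Z \<times> M)"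
    proof
      assume "y' \<in> case_prod act ` (Z \<times> M)"
      then obtain z m where "y' = act z m" "z \<in> Z" "m \<in> M"
        by auto
      moreover have "act y' (- m) \<in> - Z"
        using N(3) \<open>y' \<in> N\<close> \<open>m \<in> M\<close> by blast
      ultimately show False
        by simp
    qed
  qed
  with N(1,2) show "\<exists>T. open T \<and> y \<in> T \<and> T \<subseteq> - case_prod act ` (Z \<times> M)"
    by blast
qed

lemma F_proper_return_set:
  assumes "F_proper act F"
  obtains N C where "open N" "y \<in> N" "compact C" "\<And>f g. f \<in> F \<Longrightarrow> act f g \<in> N \<Longrightarrow> g \<in> C"
proof -
  obtain Vy VF where "is_nhd Vy {y}" "is_nhd VF F" "rel_compact_transp act VF Vy"
    using assms unfolding F_proper_def by blast
  then obtain N where N: "open N" "y \<in> N" "N \<subseteq> Vy" and "F \<subseteq> VF"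
    unfolding is_nhd_def by blast
  define K where "K = closure (transporter act VF Vy)"
  have "compact (uminus ` K)"
    using \<open>rel_compact_transp act VF Vy\<close> unfolding rel_compact_transp_def K_def
    by (rule compact_uminus_image)
  moreover have "g \<in> uminus ` K" if "f \<in> F" "act f g \<in> N" for f g
  proof -
    have "f \<in> (\<lambda>b. act b (- g)) ` Vy"
      using that N(3) by (intro image_eqI[where x="act f g"]) auto
    then have "- g \<in> transporter act VF Vy"
      unfolding transporter_def using that(1) \<open>F \<subseteq> VF\<close> by blast
    then have "- g \<in> K"
      unfolding K_def using closure_subset by blast
    then show ?thesis
      by (metis image_eqI minus_minus)
  qed
  ultimately show thesis
    using that N(1,2) by blast
qed

lemma closed_orbit:
  assumes "closed F" "F_proper act F"
  shows "closed (case_prod act ` (F \<times> UNIV))"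
  unfolding closed_def
proof (rule open_subopen[THEN iffD2], intro ballI)
  fix y assume y: "y \<in> - case_prod act ` (F \<times> UNIV)"
  obtain N C where N: "open N" "y \<in> N" and "compact C"
    and return: "\<And>f g. f \<in> F \<Longrightarrow> act f g \<in> N \<Longrightarrow> g \<in> C"
    using F_proper_return_set[OF assms(2)] by blast
  define K where "K = case_prod act ` (F \<times> C)"
  have "closed K"
    unfolding K_def using assms(1) \<open>compact C\<close> by (rule closed_act_image)
  moreover have "N - K \<subseteq> - case_prod act ` (F \<times> UNIV)"
  proof
    fix y' assume y': "y' \<in> N - K"
    show "y' \<in> - case_prod act ` (F \<times> UNIV)"
    proof
      assume "y' \<in> case_prod act ` (F \<times> UNIV)"
      then obtain f g where "y' = act f g" "f \<in> F"
        by auto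
      with y' return have "g \<in> C"
        by blast
      with \<open>y' = act f g\<close> \<open>f \<in> F\<close> have "y' \<in> K"
        unfolding K_def by auto
      with y' show False
        by blast
    qed
  qed
  moreover have "y \<in> N - K"
    using y N(2) unfolding K_def by auto
  ultimately show "\<exists>T. open T \<and> y \<in> T \<and> T \<subseteq> - case_prod act ` (F \<times> UNIV)"
    using N(1) by (meson open_Diff)
qed

lemma locally_finite_act_images:
  assumes "compact D" "locally_finite_in euclidean \<Z>"
  obtains N where "open N" "y \<in> N" "finite {Z\<in>\<Z>. case_prod act ` (Z \<times> D) \<inter> N \<noteq> {}}"
proof -
  have "continuous_on D (case_prod act \<circ> (\<lambda>m. (y, - m)))"
    by (intro continuous_on_compose continuous_intros continuous_on_subset[OF continuous_on_act]) simp
  then have "compact ((\<lambda>m. act y (- m)) ` D)"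
    using assms(1) compact_continuous_image by (fastforce simp: o_def)
  then obtain V where V: "open V" "(\<lambda>m. act y (- m)) ` D \<subseteq> V" "finite {Z\<in>\<Z>. Z \<inter> V \<noteq> {}}"
    using locally_finite_compact_neighbourhood[OF assms(2)] by blast
  moreover from V(2) have "\<forall>m\<in>D. act y (- m) \<in> V"
    by blast
  ultimately obtain N where N: "open N" "y \<in> N" "\<forall>y'\<in>N. \<forall>m\<in>D. act y' (- m) \<in> V"
    using act_tube[OF assms(1)] by blast
  have "{Z\<in>\<Z>. case_prod act ` (Z \<times> D) \<inter> N \<noteq> {}} \<subseteq> {Z\<in>\<Z>. Z \<inter> V \<noteq> {}}"
  proof
    fix Z assume "Z \<in> {Z\<in>\<Z>. case_prod act ` (Z \<times> D) \<inter> N \<noteq> {}}"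
    then obtain z m where "Z \<in> \<Z>" "z \<in> Z" "m \<in> D" "act z m \<in> N"
      by auto
    then have "act (act z m) (- m) \<in> V"
      using N(3) by blast
    with \<open>Z \<in> \<Z>\<close> \<open>z \<in> Z\<close> show "Z \<in> {Z\<in>\<Z>. Z \<inter> V \<noteq> {}}"
      by auto
  qed
  then show thesis
    using that N(1,2) V(3) finite_subset by blast
qed

lemma act_local_refinement:
  assumes regular: "regular_space (euclidean :: 'g topology)" and "compact D"
    and open_\<U>: "\<forall>U\<in>\<U>. open U" and cover: "\<forall>g\<in>D. \<exists>U\<in>\<U>. act x g \<in> U"
  obtains A \<M> where "open A" "x \<in> A" "finite \<M>" "D \<subseteq> \<Union>\<M>"
    "\<forall>M\<in>\<M>. compact M \<and> M \<subseteq> D \<and> (\<exists>U\<in>\<U>. case_prod act ` (A \<times> M) \<subseteq> U)"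
proof -
  have "\<exists>A N V. open A \<and> open N \<and> closed V \<and> x \<in> A \<and> d \<in> N \<and> N \<subseteq> V \<and>
                (\<exists>U\<in>\<U>. case_prod act ` (A \<times> V) \<subseteq> U)" if "d \<in> D" for d
  proof -
    obtain U where "U \<in> \<U>" "act x d \<in> U"
      using cover \<open>d \<in> D\<close> by blast
    have "open (case_prod act -` U)"
      using open_\<U> \<open>U \<in> \<U>\<close> continuous_on_act by (blast intro: open_vimage)
    moreover have "(x, d) \<in> case_prod act -` U"
      using \<open>act x d \<in> U\<close> by simp
    ultimately obtain A W where "open A" "open W" "(x, d) \<in> A \<times> W" "A \<times> W \<subseteq> case_prod act -` U"
      by (rule open_prod_elim)
    moreover obtain N V where "open N" "closed V" "d \<in> N" "N \<subseteq> V" "V \<subseteq> W"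
      using regular_space_euclidean_closed_neighbourhood[OF regular \<open>open W\<close>] \<open>(x, d) \<in> A \<times> W\<close>
      by blast
    moreover have "A \<times> V \<subseteq> case_prod act -` U"
      using \<open>A \<times> W \<subseteq> case_prod act -` U\<close> \<open>V \<subseteq> W\<close> by blast
    then have "case_prod act ` (A \<times> V) \<subseteq> U"
      by (simp add: image_subset_iff_subset_vimage)
    ultimately show ?thesis
      using \<open>U \<in> \<U>\<close> by blast
  qed
  then obtain A N V where local: "\<And>d. d \<in> D \<Longrightarrow> open (A d) \<and> open (N d) \<and> closed (V d) \<and>
      x \<in> A d \<and> d \<in> N d \<and> N d \<subseteq> V d \<and> (\<exists>U\<in>\<U>. case_prod act ` (A d \<times> V d) \<subseteq> U)"
    by metis
  obtain C where "C \<subseteq> D" "finite C" "D \<subseteq> (\<Union>d\<in>C. N d)"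
    using compactE_image[OF \<open>compact D\<close>, of D N] local by blast
  show thesis
  proof
    show "open (\<Inter>d\<in>C. A d)" "x \<in> (\<Inter>d\<in>C. A d)"
      using local \<open>C \<subseteq> D\<close> \<open>finite C\<close> by auto
    show "finite ((\<lambda>d. D \<inter> V d) ` C)"
      using \<open>finite C\<close> by simp
    show "D \<subseteq> \<Union>((\<lambda>d. D \<inter> V d) ` C)"
    proof
      fix g assume "g \<in> D"
      then obtain d where "d \<in> C" "g \<in> N d"
        using \<open>D \<subseteq> (\<Union>d\<in>C. N d)\<close> by blast
      moreover have "N d \<subseteq> V d"
        using local[of d] \<open>d \<in> C\<close> \<open>C \<subseteq> D\<close> by blast
      ultimately show "g \<in> \<Union>((\<lambda>d. D \<inter> V d) ` C)"
        using \<open>g \<in> D\<close> by blast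
    qed
    show "\<forall>M\<in>(\<lambda>d. D \<inter> V d) ` C. compact M \<and> M \<subseteq> D \<and>
            (\<exists>U\<in>\<U>. case_prod act ` ((\<Inter>d\<in>C. A d) \<times> M) \<subseteq> U)"
    proof
      fix M assume "M \<in> (\<lambda>d. D \<inter> V d) ` C"
      then obtain d where "d \<in> C" "M = D \<inter> V d"
        by blast
      with local[of d] \<open>C \<subseteq> D\<close> obtain U where "U \<in> \<U>" "case_prod act ` (A d \<times> V d) \<subseteq> U"
        by blast
      moreover have "(\<Inter>d\<in>C. A d) \<times> M \<subseteq> A d \<times> V d"
        using \<open>d \<in> C\<close> \<open>M = D \<inter> V d\<close> by blast
      moreover have "compact M"
        using \<open>M = D \<inter> V d\<close> \<open>compact D\<close> local \<open>d \<in> C\<close> \<open>C \<subseteq> D\<close> by (blast intro: compact_Int_closed)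
      ultimately show "compact M \<and> M \<subseteq> D \<and> (\<exists>U\<in>\<U>. case_prod act ` ((\<Inter>d\<in>C. A d) \<times> M) \<subseteq> U)"
        using \<open>M = D \<inter> V d\<close> by blast
    qed
  qed
qed

lemma locally_finite_orbit_pieces:
  assumes "closed F" "F_proper act F" and "locally_finite_in euclidean \<D>"
    and compact_\<D>: "\<forall>D\<in>\<D>. compact D"
    and lf_\<Z>: "\<forall>D\<in>\<D>. locally_finite_in (top_of_set F) (\<Z> D)"
    and \<M>: "\<forall>D\<in>\<D>. \<forall>Z\<in>\<Z> D. finite (\<M> D Z) \<and> (\<forall>M\<in>\<M> D Z. M \<subseteq> D)"
  shows "locally_finite_in euclidean
           {case_prod act ` (Z \<times> M) | D Z M. D \<in> \<D> \<and> Z \<in> \<Z> D \<and> M \<in> \<M> D Z}"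
    (is "locally_finite_in euclidean ?\<A>")
  unfolding locally_finite_in_def
proof (intro conjI ballI)
  fix y :: 'x
  obtain N\<^sub>0 C where "open N\<^sub>0" "y \<in> N\<^sub>0" "compact C"
    and return: "\<And>f g. f \<in> F \<Longrightarrow> act f g \<in> N\<^sub>0 \<Longrightarrow> g \<in> C"
    using F_proper_return_set[OF assms(2)] by blast
  obtain W where W: "C \<subseteq> W" "finite {D\<in>\<D>. D \<inter> W \<noteq> {}}"
    using locally_finite_compact_neighbourhood[OF assms(3) \<open>compact C\<close>] by blast
  have finite_\<D>\<^sub>0: "finite {D\<in>\<D>. D \<inter> C \<noteq> {}}"
    using W(2) by (rule rev_finite_subset) (use W(1) in blast)
  have "closedin euclidean F"
    using \<open>closed F\<close> by simp
  have "\<forall>D\<in>\<D>. \<exists>N. open N \<and> y \<in> N \<and> finite {Z\<in>\<Z> D. case_prod act ` (Z \<times> D) \<inter> N \<noteq> {}}"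
  proof
    fix D assume "D \<in> \<D>"
    then have "compact D" "locally_finite_in euclidean (\<Z> D)"
      using lf_\<Z> compact_\<D> locally_finite_in_closedin_subtopology[OF \<open>closedin euclidean F\<close>] by blast+
    then obtain N where "open N" "y \<in> N" "finite {Z\<in>\<Z> D. case_prod act ` (Z \<times> D) \<inter> N \<noteq> {}}"
      using locally_finite_act_images by blast
    then show "\<exists>N. open N \<and> y \<in> N \<and> finite {Z\<in>\<Z> D. case_prod act ` (Z \<times> D) \<inter> N \<noteq> {}}"
      by blast
  qed
  then obtain N where N: "\<forall>D\<in>\<D>. open (N D) \<and> y \<in> N D \<and>
      finite {Z\<in>\<Z> D. case_prod act ` (Z \<times> D) \<inter> N D \<noteq> {}}"
    by (rule bchoice[THEN exE])
  define V where "V = N\<^sub>0 \<inter> (\<Inter>D\<in>{D\<in>\<D>. D \<inter> C \<noteq> {}}. N D)"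
  have "open V" "y \<in> V"
    unfolding V_def using \<open>open N\<^sub>0\<close> \<open>y \<in> N\<^sub>0\<close> finite_\<D>\<^sub>0 N by auto
  define T where "T = (SIGMA D:{D\<in>\<D>. D \<inter> C \<noteq> {}}.
                         SIGMA Z:{Z\<in>\<Z> D. case_prod act ` (Z \<times> D) \<inter> N D \<noteq> {}}. \<M> D Z)"
  have "finite T"
    unfolding T_def using finite_\<D>\<^sub>0 N \<M> by (auto intro!: finite_SigmaI)
  moreover have "{P\<in>?\<A>. P \<inter> V \<noteq> {}} \<subseteq> (\<lambda>(D, Z, M). case_prod act ` (Z \<times> M)) ` T"
  proof
    fix P assume "P \<in> {P\<in>?\<A>. P \<inter> V \<noteq> {}}"
    then obtain D Z M where P: "P = case_prod act ` (Z \<times> M)" "D \<in> \<D>" "Z \<in> \<Z> D" "M \<in> \<M> D Z"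
      and "P \<inter> V \<noteq> {}"
      by blast
    then obtain z m where "z \<in> Z" "m \<in> M" "act z m \<in> V"
      by auto
    have "z \<in> F"
      using lf_\<Z> P(2,3) \<open>z \<in> Z\<close> unfolding locally_finite_in_def by auto
    moreover have "act z m \<in> N\<^sub>0"
      using \<open>act z m \<in> V\<close> unfolding V_def by blast
    ultimately have "m \<in> C"
      by (rule return)
    moreover have "m \<in> D"
      using \<M> P(2,3,4) \<open>m \<in> M\<close> by blast
    ultimately have D: "D \<in> {D\<in>\<D>. D \<inter> C \<noteq> {}}"
      using P(2) by blast
    then have "act z m \<in> N D"
      using \<open>act z m \<in> V\<close> unfolding V_def by blast
    with \<open>z \<in> Z\<close> \<open>m \<in> D\<close> have "case_prod act ` (Z \<times> D) \<inter> N D \<noteq> {}"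
      by blast
    with D P(3,4) have "(D, Z, M) \<in> T"
      unfolding T_def by blast
    then show "P \<in> (\<lambda>(D, Z, M). case_prod act ` (Z \<times> M)) ` T"
      using P(1) by force
  qed
  ultimately have "finite {P\<in>?\<A>. P \<inter> V \<noteq> {}}"
    by (meson finite_imageI finite_subset)
  then show "\<exists>V. openin euclidean V \<and> y \<in> V \<and> finite {P\<in>?\<A>. P \<inter> V \<noteq> {}}"
    using \<open>open V\<close> \<open>y \<in> V\<close> by auto
qed simp

lemma orbit_closed_refinement:
  fixes F :: "'x set"
  defines "Y \<equiv> case_prod act ` (F \<times> UNIV)"
  assumes lc: "locally_compact_space (euclidean :: 'g topology)"
    and Hausdorff_G: "Hausdorff_space (euclidean :: 'g topology)"
    and "closed F" and paracompact_F: "paracompact_space (top_of_set F)"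
    and Hausdorff_F: "Hausdorff_space (top_of_set F)" and "F_proper act F"
    and open_\<U>: "\<forall>U\<in>\<U>. openin (top_of_set Y) U" and cover_\<U>: "\<Union>\<U> = Y"
  shows "\<exists>\<A>. locally_finite_closed_refinement (top_of_set Y) \<U> \<A>"
proof -
  obtain \<D> :: "'g set set" where \<D>: "\<forall>D\<in>\<D>. compact D" "\<Union>\<D> = UNIV" "locally_finite_in euclidean \<D>"
    using locally_compact_group_locally_finite_compact_cover[OF lc] by blast
  have regular: "regular_space (euclidean :: 'g topology)"
    by (rule locally_compact_Hausdorff_imp_regular_space[OF lc Hausdorff_G])
  define \<V> where "\<V> = {V. open V \<and> (\<exists>U\<in>\<U>. Y \<inter> V \<subseteq> U)}"
  have open_\<V>: "\<forall>V\<in>\<V>. open V"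
    unfolding \<V>_def by blast
  have cover_\<V>: "\<exists>V\<in>\<V>. act f g \<in> V" if "f \<in> F" for f g
  proof -
    have "act f g \<in> \<Union>\<U>"
      unfolding cover_\<U> Y_def using that by force
    then obtain U where "U \<in> \<U>" "act f g \<in> U"
      by blast
    moreover obtain V where "open V" "U = Y \<inter> V"
      using open_\<U> \<open>U \<in> \<U>\<close> unfolding openin_open by blast
    ultimately show ?thesis
      unfolding \<V>_def by blast
  qed
  have "\<exists>A \<M>. open A \<and> f \<in> A \<and> finite \<M> \<and> D \<subseteq> \<Union>\<M> \<and>
          (\<forall>M\<in>\<M>. compact M \<and> M \<subseteq> D \<and> (\<exists>V\<in>\<V>. case_prod act ` (A \<times> M) \<subseteq> V))"
    if "D \<in> \<D>" "f \<in> F" for D f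
  proof -
    have "compact D"
      using \<D>(1) that(1) by blast
    moreover have "\<forall>g\<in>D. \<exists>V\<in>\<V>. act f g \<in> V"
      using cover_\<V> that(2) by blast
    ultimately obtain A \<M> where "open A" "f \<in> A" "finite \<M>" "D \<subseteq> \<Union>\<M>"
      "\<forall>M\<in>\<M>. compact M \<and> M \<subseteq> D \<and> (\<exists>V\<in>\<V>. case_prod act ` (A \<times> M) \<subseteq> V)"
      using act_local_refinement[OF regular _ open_\<V>] by metis
    then show ?thesis
      by blast
  qed
  then obtain A \<M> where A\<M>: "\<And>D f. D \<in> \<D> \<Longrightarrow> f \<in> F \<Longrightarrow> open (A D f) \<and> f \<in> A D f \<and>
      finite (\<M> D f) \<and> D \<subseteq> \<Union>(\<M> D f) \<and>
      (\<forall>M\<in>\<M> D f. compact M \<and> M \<subseteq> D \<and> (\<exists>V\<in>\<V>. case_prod act ` (A D f \<times> M) \<subseteq> V))"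
    by metis
  have "\<exists>\<Z>. locally_finite_closed_refinement (top_of_set F) ((\<lambda>f. F \<inter> A D f) ` F) \<Z>"
    if "D \<in> \<D>" for D
    using A\<M> that by (intro paracompact_space_closed_refinement paracompact_F Hausdorff_F) auto
  then obtain \<Z> where \<Z>: "\<And>D. D \<in> \<D> \<Longrightarrow>
      locally_finite_closed_refinement (top_of_set F) ((\<lambda>f. F \<inter> A D f) ` F) (\<Z> D)"
    by metis
  have "\<exists>f. f \<in> F \<and> Z \<subseteq> A D f" if "D \<in> \<D>" "Z \<in> \<Z> D" for D Z
    using locally_finite_closed_refinementD(3)[OF \<Z>[OF that(1)] that(2)] by blast
  then obtain \<phi> where \<phi>: "\<And>D Z. D \<in> \<D> \<Longrightarrow> Z \<in> \<Z> D \<Longrightarrow> \<phi> D Z \<in> F \<and> Z \<subseteq> A D (\<phi> D Z)"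
    by metis
  have closed_\<Z>: "closed Z" if "D \<in> \<D>" "Z \<in> \<Z> D" for D Z
    using locally_finite_closed_refinementD(1)[OF \<Z>[OF that(1)] that(2)] \<open>closed F\<close>
    by (rule closedin_closed_trans)
  have cover_\<Z>: "\<Union>(\<Z> D) = F" and lf_\<Z>: "locally_finite_in (top_of_set F) (\<Z> D)"
    if "D \<in> \<D>" for D
    using locally_finite_closed_refinementD(2,4)[OF \<Z>[OF that]] by simp_all
  define \<A> where "\<A> = {case_prod act ` (Z \<times> M) | D Z M. D \<in> \<D> \<and> Z \<in> \<Z> D \<and> M \<in> \<M> D (\<phi> D Z)}"
  have piece_subset: "case_prod act ` (Z \<times> M) \<subseteq> Y" if "D \<in> \<D>" "Z \<in> \<Z> D" for D Z M
    using cover_\<Z>[OF that(1)] that(2) unfolding Y_def by blast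
  have "\<forall>P\<in>\<A>. closedin (top_of_set Y) P \<and> (\<exists>U\<in>\<U>. P \<subseteq> U)"
  proof
    fix P assume "P \<in> \<A>"
    then obtain D Z M where P: "P = case_prod act ` (Z \<times> M)" "D \<in> \<D>" "Z \<in> \<Z> D" "M \<in> \<M> D (\<phi> D Z)"
      unfolding \<A>_def by blast
    then have "\<phi> D Z \<in> F" "Z \<subseteq> A D (\<phi> D Z)"
      using \<phi> by blast+
    then obtain V where "compact M" "V \<in> \<V>" "case_prod act ` (A D (\<phi> D Z) \<times> M) \<subseteq> V"
      using A\<M>[OF P(2)] P(4) by blast
    then obtain U where "U \<in> \<U>" "Y \<inter> V \<subseteq> U"
      unfolding \<V>_def by blast
    have "P \<subseteq> Y \<inter> V"
      using P piece_subset \<open>Z \<subseteq> A D (\<phi> D Z)\<close> \<open>case_prod act ` (A D (\<phi> D Z) \<times> M) \<subseteq> V\<close> by blast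
    with \<open>U \<in> \<U>\<close> \<open>Y \<inter> V \<subseteq> U\<close> have "\<exists>U\<in>\<U>. P \<subseteq> U"
      by blast
    moreover have "closed P"
      unfolding P(1) using closed_\<Z>[OF P(2,3)] \<open>compact M\<close> by (rule closed_act_image)
    then have "closedin (top_of_set Y) P"
      using P piece_subset by (blast intro: closed_subset)
    ultimately show "closedin (top_of_set Y) P \<and> (\<exists>U\<in>\<U>. P \<subseteq> U)"
      by blast
  qed
  moreover have "\<Union>\<A> = Y"
  proof
    show "\<Union>\<A> \<subseteq> Y"
      unfolding \<A>_def using piece_subset by blast
    show "Y \<subseteq> \<Union>\<A>"
    proof
      fix y assume "y \<in> Y"
      then obtain x g where "y = act x g" "x \<in> F"
        unfolding Y_def by auto
      moreover obtain D where "D \<in> \<D>" "g \<in> D"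
        using \<D>(2) by (metis UNIV_I UnionE)
      moreover from calculation obtain Z where "Z \<in> \<Z> D" "x \<in> Z"
        using cover_\<Z> by blast
      moreover from calculation obtain M where "M \<in> \<M> D (\<phi> D Z)" "g \<in> M"
        using A\<M>[of D "\<phi> D Z"] \<phi> by blast
      ultimately show "y \<in> \<Union>\<A>"
        unfolding \<A>_def by blast
    qed
  qed
  moreover have "locally_finite_in euclidean \<A>"
    unfolding \<A>_def
  proof (rule locally_finite_orbit_pieces[OF \<open>closed F\<close> \<open>F_proper act F\<close> \<D>(3,1)])
    show "\<forall>D\<in>\<D>. locally_finite_in (top_of_set F) (\<Z> D)"
      using lf_\<Z> by blast
    show "\<forall>D\<in>\<D>. \<forall>Z\<in>\<Z> D. finite (\<M> D (\<phi> D Z)) \<and> (\<forall>M\<in>\<M> D (\<phi> D Z). M \<subseteq> D)"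
      using A\<M> \<phi> by blast
  qed
  ultimately show ?thesis
    unfolding locally_finite_closed_refinement_def
    by (intro exI[of _ \<A>]) (auto intro: locally_finite_in_subtopology)
qed

end

theorem corollary2p12:
  fixes act :: "'x::t2_space \<Rightarrow> 'g::{topological_group_add, t2_space} \<Rightarrow> 'x"
    and F :: "'x set"
  assumes "locally_compact_space (euclidean :: 'g topology)"
    and "cont_right_action act"
    and "closed F"
    and "paracompact_space (subtopology euclidean F)"
    and "F_proper act F"
  shows "closed {act x g | x g. x \<in> F} \<and>
         paracompact_space (subtopology euclidean {act x g | x g. x \<in> F})"
proof -
  have saturation: "{act x g | x g. x \<in> F} = case_prod act ` (F \<times> UNIV)"
    by auto
  have "Hausdorff_space (euclidean :: 'g topology)" "Hausdorff_space (top_of_set F)"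
    by (simp_all add: Hausdorff_space_euclidean_t2 Hausdorff_space_subtopology)
  note refine = orbit_closed_refinement[OF assms(2,1) this(1) assms(3,4) this(2) assms(5)]
  show ?thesis
    unfolding saturation
  proof
    show "closed (case_prod act ` (F \<times> UNIV))"
      by (rule closed_orbit[OF assms(2,3,5)])
    show "paracompact_space (top_of_set (case_prod act ` (F \<times> UNIV)))"
      by (rule closed_refinements_imp_paracompact_space) (simp add: refine)
  qed
qed

end
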